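(* Let $a,b\in\mathbb{C}$ and suppose $\cdot_\lambda\cdot$ is a compatible left-symmetric conformal algebraic structure on $\mathcal{W}(a,b)=\mathbb{C}[\partial]L\oplus\mathbb{C}[\partial]W$ such that $\mathbb{C}[\partial]L$ is a left-symmetric conformal subalgebra. Let $c\in\mathbb{C}$ be such that $L_\lambda L=(\partial+\lambda+c)L$, and write $L_\lambda W=g_1(\lambda,\partial)L+g_2(\lambda,\partial)W$, $W_\lambda L=h_1(\lambda,\partial)L+h_2(\lambda,\partial)W$ with $g_i,h_i\in\mathbb{C}[\lambda,\partial]$. Then exactly one of the following holds: (A) $g_2(\lambda,\partial)=\partial+a\lambda+b$ and $h_2(\lambda,\partial)=0$; (B) $g_2(\lambda,\partial)=\partial+a\lambda+b+c$ and $h_2(\lambda,\partial)=c$, with $c\neq0$; (C) $g_2(\lambda,\partial)=\partial+(a-1)\lambda+b+c$ and $h_2(\lambda,\partial)=\partial+\lambda+c$.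
   Context: A conformal algebra is a $\mathbb{C}[\partial]$-module $R$ with a $\mathbb{C}$-bilinear map $R\times R\to R[\lambda]$, $(x,y)\mapsto x_\lambda y$, satisfying $(\partial x)_\lambda y=-\lambda\, x_\lambda y$ and $x_\lambda(\partial y)=(\partial+\lambda)\,x_\lambda y$. For $x,y\in R$, $y_{-\lambda-\partial}x$ means: write $y_\mu x=\sum_j \mu^j z_j$ and set $y_{-\lambda-\partial}x=\sum_j(-\lambda-\partial)^j z_j$. A left-symmetric conformal algebra is a conformal algebra with $(x_\lambda y)_{\lambda+\mu}z-x_\lambda(y_\mu z)=(y_\mu x)_{\lambda+\mu}z-y_\mu(x_\lambda z)$. A compatible left-symmetric conformal algebraic structure on a Lie conformal algebra $(R,[\cdot_\lambda\cdot])$ is a left-symmetric conformal product on the same $\mathbb{C}[\partial]$-module with $x_\lambda y-y_{-\lambda-\partial}x=[x_\lambda y]$ for all $x,y$. $\mathcal{W}(a,b)$ is the free $\mathbb{C}[\partial]$-module with basis $L,W$ and Lie conformal brackets $[L_\lambda L]=(\partial+2\lambda)L$, $[L_\lambda W]=(\partial+a\lambda+b)W$, $[W_\lambda W]=0$. "$\mathbb{C}[\partial]L$ is a left-symmetric conformal subalgebra" means $L_\lambda L\in(\mathbb{C}[\partial]L)[\lambda]$; in that case $L_\lambda L=(\partial+\lambda+c)L$ for some $c\in\mathbb{C}$ (every compatible left-symmetric conformal structure on the Virasoro conformal algebra $\mathbb{C}[\partial]L$, $[L_\lambda L]=(\partial+2\lambda)L$, has this form). *)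

theory Defs
  imports "HOL-Computational_Algebra.Polynomial" "HOL-Library.Product_Plus"
begin

text \<open>
  The free C[d]-module R = C[d]L + C[d]W is represented by pairs (p, q) of complex
  polynomials in d (coefficient of L, coefficient of W).
  R[lam] is represented by pairs of bivariate polynomials "complex poly poly":
  the outer variable is lam, the inner (coefficient) variable is d.
  R[lam, mu] is represented by pairs of "complex poly poly poly":
  outer variable lam, middle variable mu, inner variable d.
\<close>

type_synonym celt = "complex poly \<times> complex poly"
type_synonym celt1 = "complex poly poly \<times> complex poly poly"
type_synonym celt2 = "complex poly poly poly \<times> complex poly poly poly"

definition eL :: celt where "eL = (1, 0)"
definition eW :: celt where "eW = (0, 1)"

definition dR :: "celt \<Rightarrow> celt" where "dR x = ([:0, 1:] * fst x, [:0, 1:] * snd x)"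
definition smR :: "complex \<Rightarrow> celt \<Rightarrow> celt" where "smR c x = (smult c (fst x), smult c (snd x))"

definition lam1 :: "complex poly poly" where "lam1 = [:0, 1:]"
definition del1 :: "complex poly poly" where "del1 = [:[:0, 1:]:]"
definition cst1 :: "complex \<Rightarrow> complex poly poly" where "cst1 c = [:[:c:]:]"
definition sc1 :: "complex poly poly \<Rightarrow> celt1 \<Rightarrow> celt1" where "sc1 f u = (f * fst u, f * snd u)"

definition coef1 :: "celt1 \<Rightarrow> nat \<Rightarrow> celt" where "coef1 u j = (coeff (fst u) j, coeff (snd u) j)"
definition deg1 :: "celt1 \<Rightarrow> nat" where "deg1 u = max (degree (fst u)) (degree (snd u))"

definition is_conformal_product :: "(celt \<Rightarrow> celt \<Rightarrow> celt1) \<Rightarrow> bool" where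
  "is_conformal_product pr \<longleftrightarrow>
     (\<forall>x y z. pr (x + y) z = pr x z + pr y z) \<and>
     (\<forall>x y z. pr x (y + z) = pr x y + pr x z) \<and>
     (\<forall>c x y. pr (smR c x) y = sc1 (cst1 c) (pr x y)) \<and>
     (\<forall>c x y. pr x (smR c y) = sc1 (cst1 c) (pr x y)) \<and>
     (\<forall>x y. pr (dR x) y = sc1 (- lam1) (pr x y)) \<and>
     (\<forall>x y. pr x (dR y) = sc1 (del1 + lam1) (pr x y))"

text \<open>given u = y_mu x = sum_j mu^j z_j, this is y_{-lam-d} x = sum_j (-lam-d)^j z_j\<close>
definition subst_neg :: "celt1 \<Rightarrow> celt1" where
  "subst_neg u = (pcompose (fst u) (- lam1 - del1), pcompose (snd u) (- lam1 - del1))"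

definition lamT :: "complex poly poly poly" where "lamT = [:0, 1:]"
definition muT :: "complex poly poly poly" where "muT = [:[:0, 1:]:]"
definition sc2 :: "complex poly poly poly \<Rightarrow> celt2 \<Rightarrow> celt2" where "sc2 f v = (f * fst v, f * snd v)"

text \<open>embed P(nu, d) as P(lam, d), resp. as P(mu, d), resp. as P(lam+mu, d)\<close>
definition toL :: "complex poly poly \<Rightarrow> complex poly poly poly" where
  "toL P = map_poly (\<lambda>c. [:c:]) P"
definition toM :: "complex poly poly \<Rightarrow> complex poly poly poly" where
  "toM P = [:P:]"
definition toLM :: "complex poly poly \<Rightarrow> complex poly poly poly" where
  "toLM P = pcompose (toL P) (lamT + muT)"
definition map2 :: "(complex poly poly \<Rightarrow> complex poly poly poly) \<Rightarrow> celt1 \<Rightarrow> celt2" where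
  "map2 f u = (f (fst u), f (snd u))"

text \<open>(x_v y)_{lam+mu} z where v (= lamT or muT) is the variable attached to x:
  if x_v y = sum_j v^j z_j, this is sum_j v^j (z_j)_{lam+mu} z\<close>
definition comp_prod :: "(celt \<Rightarrow> celt \<Rightarrow> celt1) \<Rightarrow> complex poly poly poly \<Rightarrow> celt \<Rightarrow> celt \<Rightarrow> celt \<Rightarrow> celt2" where
  "comp_prod pr v x y z =
     (\<Sum>j\<le>deg1 (pr x y). sc2 (v ^ j) (map2 toLM (pr (coef1 (pr x y) j) z)))"

text \<open>x_{vx}(y_{vy} z): if y_{vy} z = sum_k vy^k w_k, this is sum_k vy^k x_{vx} w_k,
  where ex embeds the product x_{vx} w_k into the variable vx\<close>
definition nest_prod :: "(celt \<Rightarrow> celt \<Rightarrow> celt1) \<Rightarrow> (complex poly poly \<Rightarrow> complex poly poly poly)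
    \<Rightarrow> complex poly poly poly \<Rightarrow> celt \<Rightarrow> celt \<Rightarrow> celt \<Rightarrow> celt2" where
  "nest_prod pr ex vy x y z =
     (\<Sum>k\<le>deg1 (pr y z). sc2 (vy ^ k) (map2 ex (pr x (coef1 (pr y z) k))))"

text \<open>(x_lam y)_{lam+mu} z - x_lam (y_mu z) = (y_mu x)_{lam+mu} z - y_mu (x_lam z)\<close>
definition left_symmetric :: "(celt \<Rightarrow> celt \<Rightarrow> celt1) \<Rightarrow> bool" where
  "left_symmetric pr \<longleftrightarrow>
     (\<forall>x y z. comp_prod pr lamT x y z - nest_prod pr toL muT x y z =
              comp_prod pr muT y x z - nest_prod pr toM lamT y x z)"

text \<open>sesquilinear extension of values on the basis L, W:
  (p(d)L + q(d)W)_lam (r(d)L + s(d)W) = p(-lam) r(d+lam) L_lam L + ...\<close>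
definition negv :: "complex poly \<Rightarrow> complex poly poly" where
  "negv p = pcompose (map_poly (\<lambda>c. [:c:]) p) (- lam1)"
definition shiftv :: "complex poly \<Rightarrow> complex poly poly" where
  "shiftv r = pcompose (map_poly (\<lambda>c. [:c:]) r) (del1 + lam1)"
definition sesq_ext :: "celt1 \<Rightarrow> celt1 \<Rightarrow> celt1 \<Rightarrow> celt1 \<Rightarrow> celt \<Rightarrow> celt \<Rightarrow> celt1" where
  "sesq_ext LL LW WL WW x y =
     sc1 (negv (fst x) * shiftv (fst y)) LL + sc1 (negv (fst x) * shiftv (snd y)) LW +
     sc1 (negv (snd x) * shiftv (fst y)) WL + sc1 (negv (snd x) * shiftv (snd y)) WW"

text \<open>Lie conformal bracket of W(a,b); [W_lam L] = -[L_{-lam-d} W] by skew-symmetry\<close>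
definition LW_ab :: "complex \<Rightarrow> complex \<Rightarrow> celt1" where
  "LW_ab a b = (0, del1 + cst1 a * lam1 + cst1 b)"
definition bracketW :: "complex \<Rightarrow> complex \<Rightarrow> celt \<Rightarrow> celt \<Rightarrow> celt1" where
  "bracketW a b = sesq_ext (del1 + cst1 2 * lam1, 0) (LW_ab a b) (- subst_neg (LW_ab a b)) (0, 0)"

definition compatible_with :: "(celt \<Rightarrow> celt \<Rightarrow> celt1) \<Rightarrow> (celt \<Rightarrow> celt \<Rightarrow> celt1) \<Rightarrow> bool" where
  "compatible_with br pr \<longleftrightarrow> (\<forall>x y. pr x y - subst_neg (pr y x) = br x y)"

definition exactly_one3 :: "bool \<Rightarrow> bool \<Rightarrow> bool \<Rightarrow> bool" where
  "exactly_one3 P Q R \<longleftrightarrow> (P \<and> \<not> Q \<and> \<not> R) \<or> (\<not> P \<and> Q \<and> \<not> R) \<or> (\<not> P \<and> \<not> Q \<and> R)"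

end

theory Submission imports Defs
begin

text \<open>
  Write h(\<lambda>, \<partial>) and g(\<lambda>, \<partial>) for the W-components of W_\<lambda> L and L_\<lambda> W.
  Compatibility gives g(\<lambda>, \<partial>) = \<partial> + a\<lambda> + b + h(-\<lambda>-\<partial>, \<partial>), so the W-component of
  the left-symmetry identity for (W, L, L) becomes a functional equation for h alone.
  Its diagonal specialisation gives h(\<lambda>, u) (h(-u, u) - c) = 0, hence h(-\<partial>, \<partial>) = c
  unless h = 0. Comparing the top \<lambda>-coefficients shows that the leading coefficient
  h_n(\<partial>) times the polynomial u \<mapsto> g(u - \<partial>, \<partial>) is linear in u; as the latter has
  degree at least n for generic \<partial>, h is affine in \<lambda> with constant leading coefficient, i.e.
  h = c + \<alpha>(\<lambda> + \<partial>). Substituting back yields \<alpha>^2 = \<alpha>.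
\<close>

lemma coeff_pcompose_shift_top:
  fixes p :: "'a::idom poly"
  assumes "degree p \<le> n"
  shows "coeff (p \<circ>\<^sub>p [:s, 1:]) n = coeff p n"
proof (cases "degree p = n")
  case True
  then show ?thesis
    using lead_coeff_comp[of "[:s, 1:]" p] by (simp add: degree_pcompose)
next
  case False
  with assms show ?thesis
    by (simp add: coeff_eq_0 degree_pcompose)
qed

lemma coeff_pcompose_shift_below_top:
  fixes p :: "'a::idom poly"
  assumes "degree p \<le> Suc k"
  shows "coeff (p \<circ>\<^sub>p [:s, 1:]) k = coeff p k + of_nat (Suc k) * s * coeff p (Suc k)"
  using assms
proof (induction p arbitrary: k)
  case 0
  then show ?case by simp
next
  case (pCons a p)
  have deg_p: "degree p \<le> k"
    using pCons.prems by (auto split: if_splits)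
  show ?case
  proof (cases k)
    case 0
    with deg_p obtain e where "p = [:e:]"
      by (metis degree_eq_zeroE le_zero_eq)
    with 0 show ?thesis
      by (simp add: pcompose_pCons)
  next
    case (Suc j)
    with pCons.IH[of j] deg_p coeff_pcompose_shift_top[OF deg_p, of s] show ?thesis
      by (simp add: pcompose_pCons algebra_simps)
  qed
qed

definition poly2 :: "'a::comm_semiring_1 poly poly \<Rightarrow> 'a \<Rightarrow> 'a \<Rightarrow> 'a" where
  "poly2 P l d = poly (poly P [:l:]) d"

definition poly3 :: "'a::comm_semiring_1 poly poly poly \<Rightarrow> 'a \<Rightarrow> 'a \<Rightarrow> 'a \<Rightarrow> 'a" where
  "poly3 T l m d = poly (poly (poly T [:[:l:]:]) [:m:]) d"

definition eval_inner :: "'a::comm_semiring_1 poly poly \<Rightarrow> 'a \<Rightarrow> 'a poly" where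
  "eval_inner P d = map_poly (\<lambda>q. poly q d) P"

lemma poly_poly_eq_poly_map_poly: "poly (poly P X) d = poly (map_poly (\<lambda>q. poly q d) P) (poly X d)"
  by (induction P) (auto simp: map_poly_pCons)

lemma poly2_eq_poly_eval_inner: "poly2 P l d = poly (eval_inner P d) l"
  by (simp add: poly2_def eval_inner_def poly_poly_eq_poly_map_poly)

lemma coeff_eval_inner: "coeff (eval_inner P d) i = poly (coeff P i) d"
  by (simp add: eval_inner_def coeff_map_poly)

lemma degree_eval_inner_le: "degree (eval_inner P d) \<le> degree P"
  by (simp add: eval_inner_def map_poly_degree_leq)

lemma poly2_simps [simp]:
  fixes P Q :: "'a::comm_ring_1 poly poly"
  shows "poly2 (P + Q) l d = poly2 P l d + poly2 Q l d"
  "poly2 (P - Q) l d = poly2 P l d - poly2 Q l d"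
  "poly2 (P * Q) l d = poly2 P l d * poly2 Q l d"
  "poly2 (- P) l d = - poly2 P l d"
  "poly2 0 l d = 0"
  "poly2 (sum f A) l d = (\<Sum>x\<in>A. poly2 (f x) l d)"
  "poly2 (smult q P) l d = poly q d * poly2 P l d"
  by (simp_all add: poly2_def poly_sum)

lemma poly2_lam1_del1_cst1 [simp]:
  "poly2 lam1 l d = l" "poly2 del1 l d = d" "poly2 (cst1 c) l d = c"
  by (simp_all add: poly2_def lam1_def del1_def cst1_def)

lemma poly3_simps [simp]:
  fixes P :: "'a::comm_semiring_1 poly poly poly"
  shows "poly3 (P + Q) l m d = poly3 P l m d + poly3 Q l m d"
  "poly3 (P * Q) l m d = poly3 P l m d * poly3 Q l m d"
  "poly3 (P ^ j) l m d = poly3 P l m d ^ j"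
  "poly3 (sum f A) l m d = (\<Sum>x\<in>A. poly3 (f x) l m d)"
  by (simp_all add: poly3_def poly_sum)

lemma poly3_diff [simp]:
  fixes P Q :: "'a::comm_ring_1 poly poly poly"
  shows "poly3 (P - Q) l m d = poly3 P l m d - poly3 Q l m d"
  by (simp add: poly3_def)

lemma poly3_lamT_muT [simp]: "poly3 lamT l m d = l" "poly3 muT l m d = m"
  by (simp_all add: poly3_def lamT_def muT_def)

lemma poly3_toL [simp]: "poly3 (toL P) l m d = poly2 P l d"
  by (simp add: poly3_def poly2_def toL_def pcompose_altdef[symmetric] pcompose_pCons_0)

lemma poly3_toM [simp]: "poly3 (toM P) l m d = poly2 P m d"
  by (simp add: poly3_def poly2_def toM_def)

lemma poly3_toLM [simp]: "poly3 (toLM P) l m d = poly2 P (l + m) d"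
proof -
  have "poly (toLM P) [:[:l:]:] = P \<circ>\<^sub>p [:[:l:], 1:]"
    by (simp add: toLM_def toL_def poly_pcompose lamT_def muT_def pcompose_altdef[symmetric])
  then show ?thesis by (simp add: poly3_def poly2_def poly_pcompose)
qed

lemma poly2_negv [simp]: "poly2 (negv p) l d = poly p (- l)"
  by (simp add: poly2_def negv_def poly_pcompose lam1_def pcompose_altdef[symmetric] pcompose_pCons_0)

lemma poly2_shiftv [simp]: "poly2 (shiftv r) l d = poly r (d + l)"
proof -
  have "poly (shiftv r) [:l:] = r \<circ>\<^sub>p [:l, 1:]"
    by (simp add: shiftv_def poly_pcompose lam1_def del1_def pcompose_altdef[symmetric])
  then show ?thesis by (simp add: poly2_def poly_pcompose add.commute)
qed

lemma poly2_pcompose_neg_lam_del [simp]: "poly2 (P \<circ>\<^sub>p (- lam1 - del1)) l d = poly2 P (- l - d) d"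
proof -
  have "poly (P \<circ>\<^sub>p (- lam1 - del1)) [:l:] = poly P [:- l, -1:]"
    by (simp add: poly_pcompose lam1_def del1_def)
  then show ?thesis by (simp add: poly2_def poly_poly_eq_poly_map_poly)
qed

lemma poly2_eq_sum_coeff:
  "degree P \<le> N \<Longrightarrow> poly2 P l d = (\<Sum>j\<le>N. l ^ j * poly (coeff P j) d)"
  unfolding poly2_eq_poly_eval_inner
  by (subst poly_as_sum_of_monoms'[symmetric, where n = N])
     (auto intro: order.trans[OF degree_eval_inner_le] simp: coeff_eval_inner poly_sum poly_monom mult.commute)

lemma poly2_eq_iff:
  fixes P Q :: "'a::{idom, ring_char_0} poly poly"
  shows "P = Q \<longleftrightarrow> (\<forall>l d. poly2 P l d = poly2 Q l d)"
proof (intro iffI allI)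
  assume "\<forall>l d. poly2 P l d = poly2 Q l d"
  then have "poly2 (P - Q) l d = 0" for l d
    by simp
  then have "eval_inner (P - Q) d = 0" for d
    by (simp add: poly2_eq_poly_eval_inner poly_all_0_iff_0[symmetric] del: poly2_simps)
  then have "poly (coeff (P - Q) i) d = 0" for i d
    by (metis coeff_0 coeff_eval_inner)
  then have "coeff (P - Q) i = 0" for i
    by (simp add: poly_all_0_iff_0[symmetric])
  then show "P = Q" by (simp add: poly_eqI)
qed simp

definition scR :: "complex poly \<Rightarrow> celt \<Rightarrow> celt" where
  "scR p x = (p * fst x, p * snd x)"

lemma scR_pCons: "scR (pCons a p) x = smR a x + dR (scR p x)"
  by (simp add: scR_def smR_def dR_def algebra_simps)

lemma celt_decompose: "x = scR (fst x) eL + scR (snd x) eW"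
  by (simp add: scR_def eL_def eW_def)

lemma sc1_0 [simp]: "sc1 0 u = 0"
  by (simp add: sc1_def zero_prod_def)

lemma sc1_sc1: "sc1 f (sc1 g u) = sc1 (f * g) u"
  by (simp add: sc1_def mult.assoc)

lemma sc1_add_left: "sc1 (f + g) u = sc1 f u + sc1 g u"
  by (simp add: sc1_def distrib_right)

lemma negv_pCons: "negv (pCons a p) = cst1 a - lam1 * negv p"
  by (simp add: negv_def map_poly_pCons pcompose_pCons cst1_def)

lemma shiftv_pCons: "shiftv (pCons a p) = cst1 a + (del1 + lam1) * shiftv p"
  by (simp add: shiftv_def map_poly_pCons pcompose_pCons cst1_def)

context
  fixes pr :: "celt \<Rightarrow> celt \<Rightarrow> celt1"
  assumes conf: "is_conformal_product pr"
begin

lemma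
  shows pr_add_left: "pr (x + y) z = pr x z + pr y z"
    and pr_add_right: "pr x (y + z) = pr x y + pr x z"
    and pr_smR_left: "pr (smR c x) y = sc1 (cst1 c) (pr x y)"
    and pr_smR_right: "pr x (smR c y) = sc1 (cst1 c) (pr x y)"
    and pr_dR_left: "pr (dR x) y = sc1 (- lam1) (pr x y)"
    and pr_dR_right: "pr x (dR y) = sc1 (del1 + lam1) (pr x y)"
  using conf unfolding is_conformal_product_def by blast+

lemma pr_scR_left: "pr (scR p x) z = sc1 (negv p) (pr x z)"
proof (induction p)
  case 0
  have "pr 0 z = 0"
    using pr_add_left[of 0 0 z] by simp
  then show ?case
    by (simp add: scR_def negv_def zero_prod_def)
next
  case (pCons a p)
  then show ?case
    by (simp add: scR_pCons pr_add_left pr_smR_left pr_dR_left negv_pCons sc1_def algebra_simps)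
qed

lemma pr_scR_right: "pr z (scR p x) = sc1 (shiftv p) (pr z x)"
proof (induction p)
  case 0
  have "pr z 0 = 0"
    using pr_add_right[of z 0 0] by simp
  then show ?case
    by (simp add: scR_def shiftv_def zero_prod_def)
next
  case (pCons a p)
  then show ?case
    by (simp add: scR_pCons pr_add_right pr_smR_right pr_dR_right shiftv_pCons sc1_sc1 sc1_add_left)
qed

lemma pr_expand_left: "pr x z = sc1 (negv (fst x)) (pr eL z) + sc1 (negv (snd x)) (pr eW z)"
  by (subst celt_decompose) (simp add: pr_add_left pr_scR_left)

lemma pr_expand_right: "pr z x = sc1 (shiftv (fst x)) (pr z eL) + sc1 (shiftv (snd x)) (pr z eW)"
  by (subst celt_decompose) (simp add: pr_add_right pr_scR_right)

end

lemma poly3_snd_comp_prod: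
  assumes conf: "is_conformal_product pr" and v: "poly3 v l m d = V"
  shows "poly3 (snd (comp_prod pr v x y z)) l m d =
     poly2 (fst (pr x y)) V (-(l+m)) * poly2 (snd (pr eL z)) (l+m) d +
     poly2 (snd (pr x y)) V (-(l+m)) * poly2 (snd (pr eW z)) (l+m) d"
proof -
  let ?u = "pr x y" and ?N = "deg1 (pr x y)"
  have deg_fst: "degree (fst ?u) \<le> ?N" and deg_snd: "degree (snd ?u) \<le> ?N"
    by (auto simp: deg1_def)
  have coef: "poly2 (snd (pr (coef1 ?u j) z)) (l+m) d =
      poly (coeff (fst ?u) j) (-(l+m)) * poly2 (snd (pr eL z)) (l+m) d +
      poly (coeff (snd ?u) j) (-(l+m)) * poly2 (snd (pr eW z)) (l+m) d" for j
    by (subst pr_expand_left[OF conf]) (simp add: sc1_def coef1_def)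
  have "poly3 (snd (comp_prod pr v x y z)) l m d =
    (\<Sum>j\<le>?N. V ^ j * (poly (coeff (fst ?u) j) (-(l+m)) * poly2 (snd (pr eL z)) (l+m) d +
        poly (coeff (snd ?u) j) (-(l+m)) * poly2 (snd (pr eW z)) (l+m) d))"
    unfolding comp_prod_def snd_sum by (simp add: v sc2_def map2_def coef del: minus_add_distrib)
  then show ?thesis
    by (simp add: poly2_eq_sum_coeff[OF deg_fst] poly2_eq_sum_coeff[OF deg_snd]
        sum_distrib_left sum.distrib distrib_left mult_ac)
qed

lemma poly3_snd_nest_prod:
  assumes conf: "is_conformal_product pr" and vy: "poly3 vy l m d = Y"
    and ex: "\<And>P. poly3 (ex P) l m d = poly2 P X d"
  shows "poly3 (snd (nest_prod pr ex vy x y z)) l m d =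
     poly2 (fst (pr y z)) Y (d + X) * poly2 (snd (pr x eL)) X d +
     poly2 (snd (pr y z)) Y (d + X) * poly2 (snd (pr x eW)) X d"
proof -
  let ?u = "pr y z" and ?N = "deg1 (pr y z)"
  have deg_fst: "degree (fst ?u) \<le> ?N" and deg_snd: "degree (snd ?u) \<le> ?N"
    by (auto simp: deg1_def)
  have coef: "poly2 (snd (pr x (coef1 ?u j))) X d =
      poly (coeff (fst ?u) j) (d + X) * poly2 (snd (pr x eL)) X d +
      poly (coeff (snd ?u) j) (d + X) * poly2 (snd (pr x eW)) X d" for j
    by (subst pr_expand_right[OF conf]) (simp add: sc1_def coef1_def)
  have "poly3 (snd (nest_prod pr ex vy x y z)) l m d =
    (\<Sum>j\<le>?N. Y ^ j * (poly (coeff (fst ?u) j) (d + X) * poly2 (snd (pr x eL)) X d +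
        poly (coeff (snd ?u) j) (d + X) * poly2 (snd (pr x eW)) X d))"
    unfolding nest_prod_def snd_sum by (simp add: vy ex sc2_def map2_def coef)
  then show ?thesis
    by (simp add: poly2_eq_sum_coeff[OF deg_fst] poly2_eq_sum_coeff[OF deg_snd]
        sum_distrib_left sum.distrib distrib_left mult_ac)
qed

lemma left_symmetry_W_L_L:
  fixes c :: complex
  assumes conf: "is_conformal_product pr" and lsym: "left_symmetric pr"
    and LL: "pr eL eL = (del1 + lam1 + cst1 c, 0)"
  defines "h \<equiv> snd (pr eW eL)" and "g \<equiv> snd (pr eL eW)"
  shows "poly2 h l (-(l+m)) * poly2 h (l+m) d - (d+l+m+c) * poly2 h l d =
     poly2 g m (-(l+m)) * poly2 h (l+m) d - poly2 h l (d+m) * poly2 g m d"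
proof -
  have eq: "comp_prod pr lamT eW eL eL - nest_prod pr toL muT eW eL eL =
        comp_prod pr muT eL eW eL - nest_prod pr toM lamT eL eW eL"
    using lsym unfolding left_symmetric_def by blast
  have "poly3 (snd (comp_prod pr lamT eW eL eL - nest_prod pr toL muT eW eL eL)) l m d =
        poly3 (snd (comp_prod pr muT eL eW eL - nest_prod pr toM lamT eL eW eL)) l m d"
    by (simp only: eq)
  then show ?thesis
    by (simp add: poly3_snd_comp_prod[OF conf] poly3_snd_nest_prod[OF conf] LL h_def g_def algebra_simps)
qed

lemma compatibility_L_W:
  assumes "compatible_with (bracketW a b) pr"
  shows "snd (pr eL eW) = del1 + cst1 a * lam1 + cst1 b + snd (pr eW eL) \<circ>\<^sub>p (- lam1 - del1)"
proof -
  have "pr eL eW - subst_neg (pr eW eL) = bracketW a b eL eW"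
    using assms unfolding compatible_with_def by blast
  then have "snd (pr eL eW) - snd (subst_neg (pr eW eL)) = snd (bracketW a b eL eW)"
    by (metis snd_diff)
  then show ?thesis
    by (simp add: subst_neg_def bracketW_def sesq_ext_def sc1_def eL_def eW_def LW_ab_def
        negv_def shiftv_def pcompose_1 algebra_simps)
qed

text \<open>
  The W-component of the left-symmetry identity for (W, L, L), with \<mu> = u - \<partial> and
  L_\<lambda> W eliminated by compatibility.
\<close>

locale wl_functional_equation =
  fixes h :: "complex poly poly" and a b c :: complex
  assumes functional_eq: "\<And>l u d. poly2 h l u * poly2 h (-u) d =
      (-l + (a-1)*(u-d) + b) * poly2 h (l+u-d) d - (d + a*(u-d) + b) * poly2 h l u
      + (l+u+c) * poly2 h l d"
begin

lemma antidiagonal: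
  assumes "h \<noteq> 0"
  shows "poly2 h (-d) d = c"
proof -
  define q where "q = poly h [:0, -1:] - [:c:]"
  have poly_q: "poly q d = poly2 h (-d) d - c" for d
    by (simp add: q_def poly2_eq_poly_eval_inner eval_inner_def poly_poly_eq_poly_map_poly)
  have "poly2 h l u * (poly2 h (-u) u - c) = 0" for l u
    using functional_eq[of l u u] by (simp add: algebra_simps)
  then have "smult q h = 0"
    by (auto simp: poly2_eq_iff poly_q)
  with assms have "q = 0"
    by simp
  then show ?thesis
    using poly_q[of d] by simp
qed

text \<open>The coefficient of \<lambda>^n in the equation, n = degree h; the \<lambda>^(n+1) terms cancel.\<close>

lemma lead_coeff_identity:
  assumes deg_h: "degree h = Suc k"
  shows "poly (lead_coeff h) u * (poly2 h (-u) d + d + a*(u-d) + b) =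
         poly (lead_coeff h) d * ((a - 1 - of_nat (Suc k))*(u-d) + b + u + c)"
proof -
  let ?E = "eval_inner h"
  have id: "?E u * [:poly2 h (-u) d + d + a*(u-d) + b:] =
      [:(a-1)*(u-d) + b, -1:] * (?E d \<circ>\<^sub>p [:u-d, 1:]) + [:u+c, 1:] * ?E d"
    (is "?L = ?R")
  proof (rule poly_ext)
    fix l
    have "l + u - d = u - d + l"
      by simp
    then show "poly ?L l = poly ?R l"
      using functional_eq[of l u d]
      by (simp add: poly2_eq_poly_eval_inner poly_pcompose algebra_simps)
  qed
  have deg_E: "degree (?E d) \<le> Suc k"
    using degree_eval_inner_le deg_h by metis
  have "coeff ?L (Suc k) = coeff ?R (Suc k)"
    by (simp only: id)
  then show ?thesis
    using coeff_pcompose_shift_top[OF deg_E] coeff_pcompose_shift_below_top[OF deg_E]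
    by (simp add: coeff_eval_inner deg_h algebra_simps)
qed

lemma degree_bound:
  assumes "degree h \<ge> 1"
  shows "degree h + degree (lead_coeff h) \<le> 1"
proof -
  obtain k where deg_h: "degree h = Suc k"
    using assms by (cases "degree h") auto
  define hn where "hn = lead_coeff h"
  have "h \<noteq> 0"
    using deg_h by auto
  then have "hn \<noteq> 0"
    by (simp add: hn_def)
  \<comment> \<open>R d is u \<mapsto> g(u - d, d) in the notation of the header\<close>
  define R where "R d = eval_inner h d \<circ>\<^sub>p [:0, -1:] + [:(1-a)*d + b, a:]" for d
  have poly_R: "poly (R d) u = poly2 h (-u) d + d + a*(u-d) + b" for d u
    by (simp add: R_def poly_pcompose poly2_eq_poly_eval_inner algebra_simps)
  have deg_hn_R: "degree (hn * R d) \<le> 1" for d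
  proof -
    have "hn * R d = [:poly hn d * (b + c - (a - 1 - of_nat (Suc k))*d),
                       poly hn d * (a - of_nat (Suc k)):]"
      (is "_ = ?linear")
    proof (rule poly_ext)
      fix u
      have "poly (hn * R d) u = poly hn d * ((a - 1 - of_nat (Suc k))*(u-d) + b + u + c)"
        using lead_coeff_identity[OF deg_h, of u d] by (simp add: poly_R hn_def)
      then show "poly (hn * R d) u = poly ?linear u"
        by (simp add: algebra_simps)
    qed
    then show ?thesis
      by simp
  qed
  define top where "top = smult ((-1)^Suc k) hn + (if k = 0 then [:a:] else 0)"
  have coeff_R: "coeff (R d) (Suc k) = poly top d" for d
    by (cases k) (simp_all add: R_def top_def coeff_pcompose_linear coeff_eval_inner hn_def deg_h)
  show ?thesis
  proof (cases "top = 0")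
    case True
    with \<open>hn \<noteq> 0\<close> have "k = 0" "hn = [:a:]"
      by (auto simp: top_def split: if_splits)
    then show ?thesis
      by (simp add: deg_h hn_def)
  next
    case False
    with \<open>hn \<noteq> 0\<close> obtain d where "poly (hn * top) d \<noteq> 0"
      by (metis mult_eq_0_iff poly_all_0_iff_0)
    then have "coeff (R d) (Suc k) \<noteq> 0"
      by (simp add: coeff_R)
    then have "R d \<noteq> 0" and "Suc k \<le> degree (R d)"
      by (auto intro: le_degree)
    with \<open>hn \<noteq> 0\<close> have "degree hn + Suc k \<le> degree (hn * R d)"
      by (simp add: degree_mult_eq)
    with deg_hn_R[of d] show ?thesis
      by (simp add: deg_h hn_def)
  qed
qed

lemma affine_form:
  assumes "h \<noteq> 0"
  obtains \<alpha> where "\<And>l d. poly2 h l d = c + \<alpha> * (l + d)"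
proof -
  have "degree h \<le> 1 \<and> degree (coeff h 1) = 0"
  proof (cases "degree h = 0")
    case True
    then show ?thesis
      by (simp add: coeff_eq_0)
  next
    case False
    with degree_bound have "degree h + degree (lead_coeff h) \<le> 1"
      by simp
    with False have "degree h = 1" and "degree (lead_coeff h) = 0"
      by linarith+
    then show ?thesis
      by simp
  qed
  then obtain \<alpha> where "degree h \<le> 1" and "coeff h 1 = [:\<alpha>:]"
    by (metis degree_eq_zeroE)
  then have h_linear: "poly2 h l d = poly (coeff h 0) d + l * \<alpha>" for l d
    by (simp add: poly2_eq_sum_coeff[of h 1])
  have "poly (coeff h 0) d = c + \<alpha> * d" for d
    using antidiagonal[OF assms, of d] h_linear[of "-d" d] by (simp add: algebra_simps)
  with h_linear have "poly2 h l d = c + \<alpha> * (l + d)" for l d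
    by (simp add: algebra_simps)
  then show ?thesis
    by (rule that)
qed

lemma solutions: "h = 0 \<or> (c \<noteq> 0 \<and> h = cst1 c) \<or> h = del1 + lam1 + cst1 c"
proof (cases "h = 0")
  case False
  obtain \<alpha> where h_affine: "\<And>l d. poly2 h l d = c + \<alpha> * (l + d)"
    using affine_form[OF False] by blast
  have "\<alpha> * \<alpha> = \<alpha>"
    using functional_eq[of 1 0 1] by (simp add: h_affine algebra_simps)
  then consider "\<alpha> = 0" | "\<alpha> = 1"
    by (metis mult_cancel_right1)
  then show ?thesis
  proof cases
    case 1
    then have "h = cst1 c"
      by (simp add: poly2_eq_iff h_affine)
    with False show ?thesis
      by (auto simp: cst1_def)
  next
    case 2
    then have "h = del1 + lam1 + cst1 c"
      by (simp add: poly2_eq_iff h_affine algebra_simps)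
    then show ?thesis
      by simp
  qed
qed simp

end

lemma wl_functional_equation_snd_W_L:
  assumes conf: "is_conformal_product pr" and lsym: "left_symmetric pr"
    and compat: "compatible_with (bracketW a b) pr"
    and LL: "pr eL eL = (del1 + lam1 + cst1 c, 0)"
  shows "wl_functional_equation (snd (pr eW eL)) a b c"
proof
  fix l u d :: complex
  let ?h = "poly2 (snd (pr eW eL))" and ?g = "poly2 (snd (pr eL eW))"
  have g: "?g m d = d + a*m + b + ?h (-m-d) d" for m d
    using arg_cong[OF compatibility_L_W[OF compat], of "\<lambda>P. poly2 P m d"] by simp
  have args: "l + (u-d) = l+u-d" "d + (u-d) = u" "-(u-d) - -(l+u-d) = l" "-(u-d) - d = -u"
    by simp_all
  have ls: "?h l (-(l+u-d)) * ?h (l+u-d) d - (d+l+(u-d)+c) * ?h l d =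
      ?g (u-d) (-(l+u-d)) * ?h (l+u-d) d - ?h l u * ?g (u-d) d"
    using left_symmetry_W_L_L[OF conf lsym LL, of l "u-d" d] unfolding args(1,2) .
  have g1: "?g (u-d) (-(l+u-d)) = -(l+u-d) + a*(u-d) + b + ?h l (-(l+u-d))"
    using g[of "u-d" "-(l+u-d)"] unfolding args(3) .
  have g2: "?g (u-d) d = d + a*(u-d) + b + ?h (-u) d"
    using g[of "u-d" d] unfolding args(4) .
  show "?h l u * ?h (-u) d = (-l + (a-1)*(u-d) + b) * ?h (l+u-d) d - (d + a*(u-d) + b) * ?h l u
      + (l+u+c) * ?h l d"
    using ls g1 g2 by algebra
qed

theorem lemma3p1:
  fixes a b c :: complex and pr :: "celt \<Rightarrow> celt \<Rightarrow> celt1"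
  assumes conf: "is_conformal_product pr"
    and lsym: "left_symmetric pr"
    and compat: "compatible_with (bracketW a b) pr"
    and subalg: "snd (pr eL eL) = 0"
    and LL: "pr eL eL = (del1 + lam1 + cst1 c, 0)"
  shows "exactly_one3
     (snd (pr eL eW) = del1 + cst1 a * lam1 + cst1 b \<and> snd (pr eW eL) = 0)
     (snd (pr eL eW) = del1 + cst1 a * lam1 + cst1 b + cst1 c \<and> snd (pr eW eL) = cst1 c \<and> c \<noteq> 0)
     (snd (pr eL eW) = del1 + cst1 (a - 1) * lam1 + cst1 b + cst1 c \<and>
      snd (pr eW eL) = del1 + lam1 + cst1 c)"
proof -
  \<comment> \<open>the hypothesis subalg is implied by LL\<close>
  have h_cases: "snd (pr eW eL) = 0 \<or> (c \<noteq> 0 \<and> snd (pr eW eL) = cst1 c) \<or>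
      snd (pr eW eL) = del1 + lam1 + cst1 c"
    using wl_functional_equation_snd_W_L[OF conf lsym compat LL] by (rule wl_functional_equation.solutions)
  have g: "snd (pr eL eW) = del1 + cst1 a * lam1 + cst1 b + snd (pr eW eL) \<circ>\<^sub>p (- lam1 - del1)"
    using compat by (rule compatibility_L_W)
  from h_cases g show ?thesis
    unfolding exactly_one3_def
    by (auto simp: del1_def lam1_def cst1_def pcompose_pCons one_pCons)
qed

end
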